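(* Let $\varphi$ be an endomorphism of a torsion-free abelian group $A$. (R) $\varphi$ is inertial if and only if $\varphi$ is multiplication by $\frac mn$ for coprime integers $m,n$ such that, if $n\ne\pm1$, then $r_0(A)<\infty$. (L) $\varphi$ is left-inertial if and only if $\varphi$ is multiplication by $\frac mn$ for coprime integers $m,n$ with $m\neq0$ such that, if $m\ne\pm1$, then $r_0(A)<\infty$.
   Context: Abelian groups are written additively. An endomorphism $\varphi$ of $A$ is inertial if $(\varphi(X)+X)/X$ is finite for every subgroup $X\le A$, and left-inertial if $X/(X\cap\varphi(X))$ is finite for every $X\le A$. For a torsion-free group, $\varphi$ is multiplication by $\frac mn$ ($n\neq0$) means $n\varphi(x)=mx$ for all $x\in A$ (equivalently $\varphi(nx)=mx$). $r_0(A)$ denotes the torsion-free rank of $A$. *)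

theory Defs
  imports Main
begin

text \<open>An abelian group A is modelled as a type of class ab_group_add (A = UNIV).\<close>

definition zsmul :: "int \<Rightarrow> 'a::ab_group_add \<Rightarrow> 'a" where
  "zsmul n x = (if 0 \<le> n then (\<Sum>_\<in>{..<nat n}. x) else - (\<Sum>_\<in>{..<nat (- n)}. x))"

definition torsion_free :: "'a::ab_group_add itself \<Rightarrow> bool" where
  "torsion_free _ \<longleftrightarrow> (\<forall>(n::int) (x::'a). n \<noteq> 0 \<longrightarrow> zsmul n x = 0 \<longrightarrow> x = 0)"

definition endomorphism :: "('a::ab_group_add \<Rightarrow> 'a) \<Rightarrow> bool" where
  "endomorphism \<phi> \<longleftrightarrow> (\<forall>x y. \<phi> (x + y) = \<phi> x + \<phi> y)"

definition subgrp :: "'a::ab_group_add set \<Rightarrow> bool" where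
  "subgrp X \<longleftrightarrow> 0 \<in> X \<and> (\<forall>x\<in>X. \<forall>y\<in>X. x - y \<in> X)"

definition setsum :: "'a::ab_group_add set \<Rightarrow> 'a set \<Rightarrow> 'a set" where
  "setsum X Y = {x + y | x y. x \<in> X \<and> y \<in> Y}"

text \<open>For subgroups X \<subseteq> Y, the quotient Y/X is finite iff there are finitely many cosets of X in Y.\<close>
definition finite_quot :: "'a::ab_group_add set \<Rightarrow> 'a set \<Rightarrow> bool" where
  "finite_quot Y X \<longleftrightarrow> finite ((\<lambda>y. (\<lambda>x. y + x) ` X) ` Y)"

definition inertial :: "('a::ab_group_add \<Rightarrow> 'a) \<Rightarrow> bool" where
  "inertial \<phi> \<longleftrightarrow> (\<forall>X. subgrp X \<longrightarrow> finite_quot (setsum (\<phi> ` X) X) X)"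

definition left_inertial :: "('a::ab_group_add \<Rightarrow> 'a) \<Rightarrow> bool" where
  "left_inertial \<phi> \<longleftrightarrow> (\<forall>X. subgrp X \<longrightarrow> finite_quot X (X \<inter> \<phi> ` X))"

text \<open>\<phi> is multiplication by m/n: n \<noteq> 0 and n \<phi>(x) = m x for all x.\<close>
definition mult_by :: "('a::ab_group_add \<Rightarrow> 'a) \<Rightarrow> int \<Rightarrow> int \<Rightarrow> bool" where
  "mult_by \<phi> m n \<longleftrightarrow> n \<noteq> 0 \<and> (\<forall>x. zsmul n (\<phi> x) = zsmul m x)"

definition z_independent :: "'a::ab_group_add set \<Rightarrow> bool" where
  "z_independent S \<longleftrightarrow> finite S \<and>
     (\<forall>c::'a \<Rightarrow> int. (\<Sum>s\<in>S. zsmul (c s) s) = 0 \<longrightarrow> (\<forall>s\<in>S. c s = 0))"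

text \<open>r_0(A) < \<infinity>: independent subsets have bounded cardinality.\<close>
definition finite_tf_rank :: "'a::ab_group_add itself \<Rightarrow> bool" where
  "finite_tf_rank _ \<longleftrightarrow> (\<exists>N::nat. \<forall>S::'a set. z_independent S \<longrightarrow> card S \<le> N)"

end

theory Submission
  imports Defs "HOL.Modules" "HOL-Computational_Algebra.Primes" "HOL-Library.FuncSet"
begin

text \<open>Either inertia condition, applied to the cyclic subgroup generated by \<open>x\<close>, yields a
  nontrivial relation between \<open>x\<close> and \<open>\<phi>(x)\<close>, i.e. a local ratio \<open>k \<phi>(x) = l x\<close> with \<open>k \<noteq> 0\<close>.
  In a torsion-free group these local ratios agree (compare \<open>x\<close>, \<open>y\<close> and \<open>x + y\<close>),
  so \<open>\<phi>\<close> is multiplication by a fixed reduced fraction \<open>m/n\<close>.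
  For \<open>X \<le> A\<close> we have \<open>n (\<phi> X + X) \<subseteq> X\<close> and \<open>m X \<subseteq> X \<inter> \<phi> X\<close>, so both quotients are images of
  some \<open>Y/kY\<close>, which is finite when \<open>|k| = 1\<close> or when \<open>A\<close> has finite rank: a family of maximal size
  that is independent modulo \<open>pY\<close> is independent, and its residue combinations cover \<open>Y/pY\<close>.
  Conversely, for an infinite independent family \<open>M\<close> and \<open>X = \<langle>M\<rangle>\<close>, two elements \<open>\<phi> e, \<phi> e'\<close>
  (resp. \<open>e, e'\<close>) in one coset of \<open>X\<close> (resp. of \<open>X \<inter> \<phi> X\<close>) force \<open>n | m\<close> (resp. \<open>m | n\<close>),
  which coprimality excludes unless \<open>|n| = 1\<close> (resp. \<open>|m| = 1\<close>).\<close>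

section \<open>The \<open>\<int>\<close>-module structure\<close>

lemma zsmul_0 [simp]: "zsmul 0 x = 0"
  by (simp add: zsmul_def)

lemma zsmul_succ: "zsmul (k + 1) x = zsmul k x + x"
proof (cases "0 \<le> k")
  case True
  then have "nat (k + 1) = Suc (nat k)" by simp
  then show ?thesis using True by (simp add: zsmul_def)
next
  case False
  show ?thesis
  proof (cases "k = -1")
    case True then show ?thesis by (simp add: zsmul_def)
  next
    case k: False
    with \<open>\<not> 0 \<le> k\<close> have "nat (- k) = Suc (nat (- (k + 1)))" by simp
    then show ?thesis using \<open>\<not> 0 \<le> k\<close> k by (simp add: zsmul_def)
  qed
qed

lemma zsmul_pred: "zsmul (k - 1) x = zsmul k x - x"
  using zsmul_succ[of "k - 1" x] by simp

lemma zsmul_one [simp]: "zsmul 1 x = x"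
  using zsmul_succ[of 0 x] by simp

lemma zsmul_add_left: "zsmul (a + b) x = zsmul a x + zsmul b x"
proof (induct b rule: int_induct[where k=0])
  case (step1 i)
  have "zsmul (a + (i + 1)) x = zsmul (a + i) x + x"
    by (metis add.assoc zsmul_succ)
  with step1 show ?case by (simp add: zsmul_succ)
next
  case (step2 i)
  have "zsmul (a + (i - 1)) x = zsmul (a + i) x - x"
    by (metis add_diff_eq zsmul_pred)
  with step2 show ?case by (simp add: zsmul_pred)
qed simp

lemma zsmul_add_right: "zsmul k (x + y) = zsmul k x + zsmul k y"
  by (induct k rule: int_induct[where k=0]) (simp_all add: zsmul_succ zsmul_pred algebra_simps)

lemma zsmul_mult: "zsmul a (zsmul b x) = zsmul (a * b) x"
proof (induct a rule: int_induct[where k=0])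
  case (step1 i)
  then show ?case by (simp add: zsmul_succ zsmul_add_left distrib_right)
next
  case (step2 i)
  have "zsmul (i * b) x = zsmul ((i - 1) * b) x + zsmul b x"
    by (metis zsmul_add_left diff_add_cancel mult.left_commute mult_1 distrib_right)
  with step2 show ?case by (simp add: zsmul_pred)
qed simp

interpretation zm: module "zsmul :: int \<Rightarrow> 'a::ab_group_add \<Rightarrow> 'a"
  by unfold_locales (simp_all add: zsmul_add_left zsmul_add_right zsmul_mult)

lemma torsion_free_zsmul_eq_0_iff:
  assumes "torsion_free TYPE('a::ab_group_add)"
  shows "zsmul n (x::'a) = 0 \<longleftrightarrow> n = 0 \<or> x = 0"
  using assms unfolding torsion_free_def by auto

lemma torsion_free_cancel_right:
  assumes "torsion_free TYPE('a::ab_group_add)" "n \<noteq> 0" "zsmul n x = zsmul n (y::'a)"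
  shows "x = y"
  using assms torsion_free_zsmul_eq_0_iff[OF assms(1), of n "x - y"]
  by (simp add: zm.scale_right_diff_distrib)

lemma torsion_free_cancel_left:
  assumes "torsion_free TYPE('a::ab_group_add)" "(x::'a) \<noteq> 0" "zsmul c x = zsmul d x"
  shows "c = d"
  using assms torsion_free_zsmul_eq_0_iff[OF assms(1), of "c - d" x]
  by (simp add: zm.scale_left_diff_distrib)

lemma endomorphism_module_hom:
  assumes "endomorphism \<phi>"
  shows "module_hom zsmul zsmul \<phi>"
proof -
  interpret \<phi>: additive \<phi>
    using assms by unfold_locales (simp add: endomorphism_def)
  have "\<phi> (zsmul k x) = zsmul k (\<phi> x)" for k x
    by (induct k rule: int_induct[where k=0]) (simp_all add: \<phi>.zero \<phi>.add \<phi>.diff zsmul_succ zsmul_pred)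
  then show ?thesis
    by (simp add: module_hom_iff zm.module_axioms \<phi>.add)
qed

lemma subgrp_iff_subspace: "subgrp X \<longleftrightarrow> zm.subspace X"
proof
  assume X: "subgrp X"
  have add: "x + y \<in> X" if "x \<in> X" "y \<in> X" for x y
    using X that unfolding subgrp_def by (metis diff_0 diff_minus_eq_add)
  have "zsmul k x \<in> X" if "x \<in> X" for k x
    by (induct k rule: int_induct[where k=0])
      (use X that add in \<open>simp_all add: subgrp_def zsmul_succ zsmul_pred\<close>)
  then show "zm.subspace X"
    using X add unfolding zm.subspace_def subgrp_def by blast
next
  assume "zm.subspace X"
  then show "subgrp X"
    unfolding subgrp_def by (auto intro: zm.subspace_0 zm.subspace_diff)
qed

lemma subspace_setsum:
  assumes "zm.subspace X" "zm.subspace Y"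
  shows "zm.subspace (setsum X Y)"
proof -
  have "setsum X Y = zm.span (X \<union> Y)"
    using zm.span_Un[of X Y] zm.span_eq_iff[THEN iffD2, OF assms(1)] zm.span_eq_iff[THEN iffD2, OF assms(2)]
    by (simp add: setsum_def)
  then show ?thesis by simp
qed

section \<open>Cosets and finite quotients\<close>

lemma finite_quot_pigeonhole:
  assumes fin: "finite_quot Y X" and "0 \<in> X" and f: "\<And>j::nat. f j \<in> Y"
  obtains i j where "i < j" "f i - f j \<in> X"
proof -
  let ?coset = "\<lambda>y. (\<lambda>x. y + x) ` X"
  have diff: "f i - f j \<in> X" if "?coset (f i) = ?coset (f j)" for i j
  proof -
    have "f i \<in> ?coset (f j)"
      using that \<open>0 \<in> X\<close> by (metis add_0_right image_eqI)
    then show ?thesis by auto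
  qed
  have "\<not> inj (?coset \<circ> f)"
  proof
    assume inj: "inj (?coset \<circ> f)"
    have "range (?coset \<circ> f) \<subseteq> ?coset ` Y"
      using f by auto
    then have "finite (range (?coset \<circ> f))"
      using fin unfolding finite_quot_def by (rule finite_subset)
    then show False
      using finite_imageD[OF _ inj] by simp
  qed
  then obtain i j where "i \<noteq> j" "?coset (f i) = ?coset (f j)"
    unfolding inj_def by auto
  then consider "i < j" "?coset (f i) = ?coset (f j)" | "j < i" "?coset (f j) = ?coset (f i)"
    by (metis nat_neq_iff)
  then show thesis
    by cases (use that diff in blast)+
qed

lemma finite_quot_collision:
  assumes "finite_quot Y X" "0 \<in> X" "infinite M" "g ` M \<subseteq> Y"
  obtains e e' where "e \<in> M" "e' \<in> M" "e \<noteq> e'" "g e - g e' \<in> X"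
proof -
  obtain f :: "nat \<Rightarrow> _" where f: "inj f" "range f \<subseteq> M"
    using infinite_countable_subset[OF \<open>infinite M\<close>] by blast
  have "g (f j) \<in> Y" for j
    using f(2) assms(4) by blast
  then obtain i j where "i < j" "g (f i) - g (f j) \<in> X"
    by (rule finite_quot_pigeonhole[OF assms(1,2)])
  moreover have "f i \<noteq> f j"
    using f(1) \<open>i < j\<close> by (auto dest: injD)
  ultimately show thesis
    using that f(2) by blast
qed

lemma finite_quot_if_covered:
  assumes X: "zm.subspace X" and "finite R" "Y \<subseteq> setsum R X"
  shows "finite_quot Y X"
proof -
  have "(\<lambda>y. (\<lambda>x. y + x) ` X) ` Y \<subseteq> (\<lambda>r. (\<lambda>x. r + x) ` X) ` R"
  proof
    fix c assume "c \<in> (\<lambda>y. (\<lambda>x. y + x) ` X) ` Y"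
    then obtain y where y: "y \<in> Y" "c = (\<lambda>x. y + x) ` X"
      by blast
    then obtain r h where rh: "r \<in> R" "h \<in> X" "y = r + h"
      using assms(3) unfolding setsum_def by blast
    have "(\<lambda>x. (r + h) + x) ` X = (\<lambda>x. r + x) ` X"
    proof (intro set_eqI iffI)
      fix y assume "y \<in> (\<lambda>x. (r + h) + x) ` X"
      then obtain x where "x \<in> X" "y = r + (h + x)"
        by (auto simp: add.assoc)
      then show "y \<in> (\<lambda>x. r + x) ` X"
        using zm.subspace_add[OF X rh(2)] by blast
    next
      fix y assume "y \<in> (\<lambda>x. r + x) ` X"
      then obtain x where "x \<in> X" "y = (r + h) + (x - h)"
        by auto
      then show "y \<in> (\<lambda>x. (r + h) + x) ` X"
        using zm.subspace_diff[OF X _ rh(2)] by blast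
    qed
    then show "c \<in> (\<lambda>r. (\<lambda>x. r + x) ` X) ` R"
      using rh y(2) by blast
  qed
  then show ?thesis
    unfolding finite_quot_def by (rule finite_subset) (simp add: \<open>finite R\<close>)
qed

section \<open>Local ratios of an endomorphism\<close>

lemma inertial_rational_at:
  assumes endo: "endomorphism \<phi>" and "inertial \<phi>"
  obtains k l where "k \<noteq> 0" "zsmul k (\<phi> x) = zsmul l x"
proof -
  interpret \<phi>: module_hom zsmul zsmul \<phi>
    using endomorphism_module_hom[OF endo] .
  define X where "X = zm.span {x}"
  have "subgrp X"
    unfolding X_def subgrp_iff_subspace by simp
  then have fin: "finite_quot (setsum (\<phi> ` X) X) X"
    using assms(2) unfolding inertial_def by blast
  have "0 \<in> X"
    unfolding X_def by (rule zm.span_zero)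
  moreover have "\<phi> (zsmul (int j) x) \<in> setsum (\<phi> ` X) X" for j
  proof -
    have "zsmul (int j) x \<in> X"
      unfolding X_def by (simp add: zm.span_base zm.span_scale)
    then have "\<phi> (zsmul (int j) x) + 0 \<in> setsum (\<phi> ` X) X"
      unfolding setsum_def using \<open>0 \<in> X\<close> by blast
    then show ?thesis by simp
  qed
  ultimately obtain i j where "i < j" "\<phi> (zsmul (int i) x) - \<phi> (zsmul (int j) x) \<in> X"
    by (rule finite_quot_pigeonhole[OF fin])
  then obtain l where "zsmul (int i - int j) (\<phi> x) = zsmul l x"
    unfolding X_def zm.span_singleton by (auto simp: \<phi>.scale zm.scale_left_diff_distrib)
  moreover have "int i - int j \<noteq> 0"
    using \<open>i < j\<close> by simp
  ultimately show thesis
    using that by blast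
qed

lemma left_inertial_rational_at:
  assumes endo: "endomorphism \<phi>" and "left_inertial \<phi>"
  obtains k l where "k \<noteq> 0" "zsmul k x = zsmul l (\<phi> x)"
proof -
  interpret \<phi>: module_hom zsmul zsmul \<phi>
    using endomorphism_module_hom[OF endo] .
  define X where "X = zm.span {x}"
  have "subgrp X"
    unfolding X_def subgrp_iff_subspace by simp
  then have fin: "finite_quot X (X \<inter> \<phi> ` X)"
    using assms(2) unfolding left_inertial_def by blast
  have "0 \<in> X"
    unfolding X_def by (rule zm.span_zero)
  moreover have "\<phi> 0 \<in> \<phi> ` X"
    using \<open>0 \<in> X\<close> by (rule imageI)
  ultimately have "0 \<in> X \<inter> \<phi> ` X"
    by simp
  moreover have "zsmul (int j) x \<in> X" for j
    unfolding X_def by (simp add: zm.span_base zm.span_scale)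
  ultimately obtain i j where "i < j" "zsmul (int i) x - zsmul (int j) x \<in> X \<inter> \<phi> ` X"
    by (rule finite_quot_pigeonhole[OF fin])
  then obtain w where "w \<in> X" "zsmul (int i - int j) x = \<phi> w"
    by (auto simp: zm.scale_left_diff_distrib)
  moreover obtain l where "w = zsmul l x"
    using \<open>w \<in> X\<close> unfolding X_def zm.span_singleton by auto
  ultimately have "zsmul (int i - int j) x = zsmul l (\<phi> x)"
    by (simp add: \<phi>.scale)
  moreover have "int i - int j \<noteq> 0"
    using \<open>i < j\<close> by simp
  ultimately show thesis
    using that by blast
qed

lemma ratio_unique:
  assumes tf: "torsion_free TYPE('a::ab_group_add)" and "(x::'a) \<noteq> 0"
    and "zsmul k (\<phi> x) = zsmul l x" "zsmul k' (\<phi> x) = zsmul l' x"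
  shows "l * k' = l' * k"
proof -
  have "zsmul (l * k') x = zsmul k' (zsmul k (\<phi> x))"
    using assms(3) by (simp add: mult.commute)
  also have "\<dots> = zsmul k (zsmul k' (\<phi> x))"
    by (rule zm.scale_left_commute)
  also have "\<dots> = zsmul (l' * k) x"
    using assms(4) by (simp add: mult.commute)
  finally have "zsmul (l * k') x = zsmul (l' * k) x" .
  then show ?thesis
    by (rule torsion_free_cancel_left[OF tf assms(2)])
qed

lemma ratio_at_multiple:
  assumes endo: "endomorphism \<phi>" and "zsmul k (\<phi> z) = zsmul l z"
  shows "zsmul k (\<phi> (zsmul a z)) = zsmul l (zsmul a z)"
proof -
  have "zsmul k (\<phi> (zsmul a z)) = zsmul a (zsmul k (\<phi> z))"
    by (simp add: module_hom.scale[OF endomorphism_module_hom[OF endo]] mult.commute)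
  also have "\<dots> = zsmul l (zsmul a z)"
    by (simp only: assms(2)) (simp add: mult.commute)
  finally show ?thesis .
qed

lemma ratio_consistent_independent:
  fixes \<phi> :: "'a::ab_group_add \<Rightarrow> 'a"
  assumes tf: "torsion_free TYPE('a)" and endo: "endomorphism \<phi>"
    and indep: "\<And>a b. zsmul a x = zsmul b y \<Longrightarrow> a = 0" and "y \<noteq> 0"
    and x: "zsmul k (\<phi> x) = zsmul l x" and y: "zsmul k' (\<phi> y) = zsmul l' y"
    and z: "k'' \<noteq> 0" "zsmul k'' (\<phi> (x + y)) = zsmul l'' (x + y)"
  shows "l * k' = l' * k"
proof -
  have "zsmul (k' * k'' * l) x + zsmul (k * k'' * l') y
      = zsmul (k' * k'') (zsmul k (\<phi> x)) + zsmul (k * k'') (zsmul k' (\<phi> y))"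
    by (simp only: x y zm.scale_scale)
  also have "\<dots> = zsmul (k * k') (zsmul k'' (\<phi> (x + y)))"
    by (simp add: module_hom.add[OF endomorphism_module_hom[OF endo]] zm.scale_right_distrib ac_simps)
  also have "\<dots> = zsmul (k * k' * l'') x + zsmul (k * k' * l'') y"
    by (simp only: z(2)) (simp add: zm.scale_right_distrib)
  finally have "zsmul (k' * k'' * l - k * k' * l'') x = zsmul (k * k' * l'' - k * k'' * l') y"
    by (simp add: zm.scale_left_diff_distrib algebra_simps)
  moreover from this have "k' * k'' * l - k * k' * l'' = 0"
    by (rule indep)
  ultimately have e1: "k' * k'' * l = k * k' * l''"
    and "zsmul (k * k' * l'' - k * k'' * l') y = 0"
    by simp_all
  then have e2: "k * k' * l'' = k * k'' * l'"
    using torsion_free_zsmul_eq_0_iff[OF tf] \<open>y \<noteq> 0\<close> by simp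
  have "k'' * (l * k') = k'' * (l' * k)"
    using e1 e2 by algebra
  then show ?thesis
    using z(1) by simp
qed

lemma ratio_consistent:
  fixes \<phi> :: "'a::ab_group_add \<Rightarrow> 'a"
  assumes tf: "torsion_free TYPE('a)" and endo: "endomorphism \<phi>"
    and rational: "\<And>z. \<exists>k l. k \<noteq> 0 \<and> zsmul k (\<phi> z) = zsmul l z"
    and x: "x \<noteq> 0" "zsmul k (\<phi> x) = zsmul l x"
    and y: "y \<noteq> 0" "zsmul k' (\<phi> y) = zsmul l' y"
  shows "l * k' = l' * k"
proof (cases "\<exists>a b. a \<noteq> 0 \<and> zsmul a x = zsmul b y")
  case True
  then obtain a b where ab: "a \<noteq> 0" "zsmul a x = zsmul b y"
    by blast
  \<comment> \<open>then \<open>l/k\<close> and \<open>l'/k'\<close> are both ratios at the nonzero element \<open>a x = b y\<close>\<close>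
  have "zsmul a x \<noteq> 0"
    using ab(1) x(1) torsion_free_zsmul_eq_0_iff[OF tf] by blast
  moreover have "zsmul k' (\<phi> (zsmul a x)) = zsmul l' (zsmul a x)"
    unfolding ab(2) by (rule ratio_at_multiple[OF endo y(2)])
  ultimately show ?thesis
    using ratio_unique[where \<phi> = \<phi>, OF tf _ ratio_at_multiple[OF endo x(2)]] by blast
next
  case False
  obtain k'' l'' where "k'' \<noteq> 0" "zsmul k'' (\<phi> (x + y)) = zsmul l'' (x + y)"
    using rational by blast
  with False show ?thesis
    using ratio_consistent_independent[OF tf endo _ y(1) x(2) y(2)] by blast
qed

lemma int_reduced_fraction:
  fixes l k :: int
  assumes "k \<noteq> 0"
  obtains m n g where "coprime m n" "g \<noteq> 0" "l = m * g" "k = n * g"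
proof (rule that[of "l div gcd l k" "k div gcd l k" "gcd l k"])
  show "coprime (l div gcd l k) (k div gcd l k)"
    using assms by (intro div_gcd_coprime) auto
qed (use assms in simp_all)

lemma mult_by_if_rational:
  fixes \<phi> :: "'a::ab_group_add \<Rightarrow> 'a"
  assumes tf: "torsion_free TYPE('a)" and endo: "endomorphism \<phi>"
    and rational: "\<And>z. \<exists>k l. k \<noteq> 0 \<and> zsmul k (\<phi> z) = zsmul l z"
  obtains m n where "coprime m n" "mult_by \<phi> m n"
proof (cases "\<exists>x0::'a. x0 \<noteq> 0")
  case False
  then have "mult_by \<phi> 0 1"
    unfolding mult_by_def by auto
  then show thesis
    using that[of 0 1] by simp
next
  case True
  then obtain x0 :: 'a where x0: "x0 \<noteq> 0"
    by blast
  obtain k0 l0 where k0: "k0 \<noteq> 0" "zsmul k0 (\<phi> x0) = zsmul l0 x0"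
    using rational by blast
  obtain m n g where mn: "coprime m n" "g \<noteq> 0" "l0 = m * g" "k0 = n * g"
    using int_reduced_fraction[OF k0(1)] .
  have "zsmul n (\<phi> x) = zsmul m x" for x
  proof (cases "x = 0")
    case True
    then show ?thesis
      using module_hom.zero[OF endomorphism_module_hom[OF endo]] by simp
  next
    case False
    obtain k l where kl: "k \<noteq> 0" "zsmul k (\<phi> x) = zsmul l x"
      using rational by blast
    have "g * (l * n) = g * (m * k)"
      using ratio_consistent[OF tf endo rational False kl(2) x0 k0(2)] mn(3,4)
      by (simp add: ac_simps)
    then have "l * n = m * k"
      using mn(2) by simp
    have "zsmul k (zsmul n (\<phi> x)) = zsmul n (zsmul k (\<phi> x))"
      by (simp add: mult.commute)
    also have "\<dots> = zsmul n (zsmul l x)"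
      by (simp only: kl(2))
    also have "\<dots> = zsmul k (zsmul m x)"
      using \<open>l * n = m * k\<close> by (simp add: mult.commute)
    finally show ?thesis
      by (rule torsion_free_cancel_right[OF tf kl(1)])
  qed
  moreover have "n \<noteq> 0"
    using mn(4) k0(1) by auto
  ultimately show thesis
    using that mn(1) unfolding mult_by_def by blast
qed

lemma inertial_imp_mult_by:
  fixes \<phi> :: "'a::ab_group_add \<Rightarrow> 'a"
  assumes tf: "torsion_free TYPE('a)" and endo: "endomorphism \<phi>" and "inertial \<phi>"
  obtains m n where "coprime m n" "mult_by \<phi> m n"
proof -
  have "\<exists>k l. k \<noteq> 0 \<and> zsmul k (\<phi> z) = zsmul l z" for z
    using inertial_rational_at[OF endo \<open>inertial \<phi>\<close>, of z] by blast
  then show thesis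
    using mult_by_if_rational[OF tf endo] that by blast
qed

lemma left_inertial_rational:
  fixes \<phi> :: "'a::ab_group_add \<Rightarrow> 'a"
  assumes tf: "torsion_free TYPE('a)" and endo: "endomorphism \<phi>" and "left_inertial \<phi>"
  shows "\<exists>k l. k \<noteq> 0 \<and> zsmul k (\<phi> z) = zsmul l z"
proof (cases "z = 0")
  case True
  then show ?thesis
    using module_hom.zero[OF endomorphism_module_hom[OF endo]] by (intro exI[of _ 1]) simp
next
  case False
  obtain k l where kl: "k \<noteq> 0" "zsmul k z = zsmul l (\<phi> z)"
    using left_inertial_rational_at[OF endo \<open>left_inertial \<phi>\<close>] .
  then have "l \<noteq> 0"
    using False torsion_free_zsmul_eq_0_iff[OF tf] by fastforce
  then show ?thesis
    using kl(2) by (intro exI[of _ l] exI[of _ k]) simp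
qed

lemma left_inertial_imp_mult_by:
  fixes \<phi> :: "'a::ab_group_add \<Rightarrow> 'a"
  assumes tf: "torsion_free TYPE('a)" and endo: "endomorphism \<phi>" and "left_inertial \<phi>"
  obtains m n where "coprime m n" "m \<noteq> 0" "mult_by \<phi> m n"
proof -
  obtain m n where mn: "coprime m n" "mult_by \<phi> m n"
    using mult_by_if_rational[OF tf endo left_inertial_rational[OF assms]] .
  show thesis
  proof (cases "m = 0")
    case False
    then show thesis
      using that mn by blast
  next
    case True
    \<comment> \<open>then \<open>\<phi> = 0\<close>, and left inertia forces the group to be trivial\<close>
    then have "\<phi> x = 0" for x
      using mn(2) torsion_free_zsmul_eq_0_iff[OF tf] unfolding mult_by_def by auto
    have trivial: "(x::'a) = 0" for x
    proof -
      obtain k l where "k \<noteq> 0" "zsmul k x = zsmul l (\<phi> x)"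
        using left_inertial_rational_at[OF endo \<open>left_inertial \<phi>\<close>] .
      then show ?thesis
        using \<open>\<phi> x = 0\<close> torsion_free_zsmul_eq_0_iff[OF tf] by simp
    qed
    have "\<phi> x = x" for x
      using trivial[of "\<phi> x"] trivial[of x] by simp
    then have "mult_by \<phi> 1 1"
      unfolding mult_by_def by simp
    then show thesis
      using that[of 1 1] by simp
  qed
qed

section \<open>Independent families and rank\<close>

lemma z_independent_iff: "z_independent S \<longleftrightarrow> finite S \<and> zm.independent S"
  unfolding z_independent_def using zm.dependent_finite[of S] by auto

lemma independent_family_image:
  assumes "finite T"
    and indep: "\<And>a. (\<Sum>t\<in>T. zsmul (a t) (f t)) = 0 \<Longrightarrow> \<forall>t\<in>T. a t = 0"
  shows "inj_on f T" "zm.independent (f ` T)"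
proof -
  show inj: "inj_on f T"
  proof (rule inj_onI, rule ccontr)
    fix s t assume st: "s \<in> T" "t \<in> T" "f s = f t" "s \<noteq> t"
    define a where "a u = (if u = s then 1 else if u = t then -1 else (0::int))" for u
    have "(\<Sum>u\<in>T. zsmul (a u) (f u)) = (\<Sum>u\<in>{s, t}. zsmul (a u) (f u))"
      using st \<open>finite T\<close> by (intro sum.mono_neutral_right) (auto simp: a_def)
    also have "\<dots> = 0"
      using st by (simp add: a_def)
    finally have "a s = 0"
      using indep st(1) by blast
    then show False
      by (simp add: a_def)
  qed
  show "zm.independent (f ` T)"
  proof
    assume "zm.dependent (f ` T)"
    then obtain u where u: "\<exists>v\<in>f ` T. u v \<noteq> 0" "(\<Sum>v\<in>f ` T. zsmul (u v) v) = 0"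
      using zm.dependent_finite[of "f ` T"] \<open>finite T\<close> by auto
    then have "(\<Sum>t\<in>T. zsmul (u (f t)) (f t)) = 0"
      using sum.reindex[OF inj, of "\<lambda>v. zsmul (u v) v"] by simp
    then show False
      using indep[of "\<lambda>t. u (f t)"] u(1) by auto
  qed
qed

lemma independent_shear:
  fixes \<alpha> \<beta> :: "'a::ab_group_add \<Rightarrow> int"
  assumes indep: "zm.independent S" and "finite S" and "s0 \<in> S"
    and \<alpha>: "\<And>s. s \<in> S \<Longrightarrow> \<alpha> s \<noteq> 0"
  defines "f \<equiv> \<lambda>s. zsmul (\<alpha> s) s + zsmul (\<beta> s) s0"
  shows "inj_on f (S - {s0})" "zm.independent (f ` (S - {s0}))"
proof -
  have "\<forall>s\<in>S - {s0}. a s = 0" if sum0: "(\<Sum>s\<in>S - {s0}. zsmul (a s) (f s)) = 0" for a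
  proof
    fix s assume s: "s \<in> S - {s0}"
    define b where "b s = (if s = s0 then \<Sum>t\<in>S - {s0}. a t * \<beta> t else a s * \<alpha> s)" for s
    have "(\<Sum>s\<in>S. zsmul (b s) s)
        = zsmul (b s0) s0 + (\<Sum>s\<in>S - {s0}. zsmul (b s) s)"
      using \<open>finite S\<close> \<open>s0 \<in> S\<close> by (rule sum.remove)
    also have "\<dots> = (\<Sum>s\<in>S - {s0}. zsmul (a s * \<alpha> s) s) + zsmul (\<Sum>t\<in>S - {s0}. a t * \<beta> t) s0"
      by (simp add: b_def add.commute)
    also have "\<dots> = (\<Sum>s\<in>S - {s0}. zsmul (a s) (f s))"
      by (simp add: f_def zm.scale_right_distrib sum.distrib zm.scale_sum_left)
    finally have "(\<Sum>s\<in>S. zsmul (b s) s) = 0"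
      using sum0 by simp
    then have "b s = 0"
      using zm.independentD[OF indep \<open>finite S\<close> subset_refl] s by blast
    then show "a s = 0"
      using s \<alpha> by (simp add: b_def)
  qed
  then show "inj_on f (S - {s0})" "zm.independent (f ` (S - {s0}))"
    using independent_family_image[of "S - {s0}" f] \<open>finite S\<close> by simp_all
qed

lemma independent_eliminate:
  assumes indep: "zm.independent S" "finite S"
    and dc: "\<And>s. s \<in> S \<Longrightarrow> d s \<noteq> 0 \<and> zsmul (d s) s - zsmul (c s) e \<in> zm.span M"
    and s0: "s0 \<in> S" "c s0 \<noteq> 0"
  obtains T where "finite T" "zm.independent T" "T \<subseteq> zm.span M" "card T = card S - 1"
proof -
  \<comment> \<open>shear \<open>S\<close> against \<open>s0\<close> so that the \<open>e\<close>-components cancel\<close>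
  define f where "f s = zsmul (c s0 * d s) s - zsmul (c s * d s0) s0" for s
  have "c s0 * d s \<noteq> 0" if "s \<in> S" for s
    using s0(2) dc[OF that] by simp
  then have sheared: "inj_on f (S - {s0})" "zm.independent (f ` (S - {s0}))"
    unfolding f_def
    using independent_shear[of S s0 "\<lambda>s. c s0 * d s" "\<lambda>s. - (c s * d s0)"] indep s0(1)
    by simp_all
  have "f s \<in> zm.span M" if "s \<in> S" for s
  proof -
    have "f s = zsmul (c s0) (zsmul (d s) s - zsmul (c s) e) - zsmul (c s) (zsmul (d s0) s0 - zsmul (c s0) e)"
      by (simp add: f_def zm.scale_right_diff_distrib ac_simps)
    then show ?thesis
      using dc[OF that] dc[OF s0(1)] by (simp add: zm.span_diff zm.span_scale)
  qed
  then have "f ` (S - {s0}) \<subseteq> zm.span M"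
    by blast
  moreover have "card (f ` (S - {s0})) = card S - 1"
    using card_image[OF sheared(1)] s0(1) indep(2) by simp
  moreover have "finite (f ` (S - {s0}))"
    using indep(2) by simp
  ultimately show thesis
    using that[OF _ sheared(2)] by simp
qed

lemma card_independent_le:
  fixes M :: "'a::ab_group_add set"
  assumes tf: "torsion_free TYPE('a)" and "finite M"
  shows "finite S \<Longrightarrow> zm.independent S \<Longrightarrow> (\<And>s. s \<in> S \<Longrightarrow> \<exists>d. d \<noteq> 0 \<and> zsmul d s \<in> zm.span M)
    \<Longrightarrow> card S \<le> card M"
  using \<open>finite M\<close>
proof (induction M arbitrary: S rule: finite_induct)
  case empty
  have "s = 0" if "s \<in> S" for s
    using empty.prems(3)[OF that] torsion_free_zsmul_eq_0_iff[OF tf] by auto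
  then have "S = {}"
    using zm.dependent_zero empty.prems(2) by blast
  then show ?case
    by simp
next
  case (insert e M S)
  have "\<exists>d c. d \<noteq> 0 \<and> zsmul d s - zsmul c e \<in> zm.span M" if "s \<in> S" for s
    using insert.prems(3)[OF that] zm.span_breakdown_eq by blast
  then obtain d c where dc: "\<And>s. s \<in> S \<Longrightarrow> d s \<noteq> 0 \<and> zsmul (d s) s - zsmul (c s) e \<in> zm.span M"
    by metis
  show ?case
  proof (cases "\<forall>s\<in>S. c s = 0")
    case True
    then have "card S \<le> card M"
      using insert.IH[OF insert.prems(1,2)] dc by fastforce
    then show ?thesis
      using insert.hyps by simp
  next
    case False
    then obtain s0 where "s0 \<in> S" "c s0 \<noteq> 0"
      by blast
    then obtain T where T: "finite T" "zm.independent T" "T \<subseteq> zm.span M" "card T = card S - 1"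
      using independent_eliminate[OF insert.prems(2,1) dc] by blast
    have "\<exists>d. d \<noteq> 0 \<and> zsmul d t \<in> zm.span M" if "t \<in> T" for t
      using that T(3) by (intro exI[of _ 1]) auto
    then have "card T \<le> card M"
      by (rule insert.IH[OF T(1,2)])
    moreover have "card S \<noteq> 0"
      using \<open>s0 \<in> S\<close> insert.prems(1) by auto
    ultimately show ?thesis
      using T(4) insert.hyps by simp
  qed
qed

lemma maximal_independent_exists:
  "\<exists>M::'a::ab_group_add set. zm.independent M \<and> (\<forall>N. zm.independent N \<longrightarrow> M \<subseteq> N \<longrightarrow> N = M)"
proof -
  have "\<forall>C\<in>chains {M. zm.independent M}. \<exists>U\<in>{M. zm.independent M}. \<forall>X\<in>C. X \<subseteq> U"
  proof
    fix C assume C: "C \<in> chains {M. zm.independent M}"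
    have "zm.independent (\<Union>C)"
      by (rule zm.independent_Union_directed) (use C in \<open>auto simp: chains_def chain_subset_def\<close>)
    then show "\<exists>U\<in>{M. zm.independent M}. \<forall>X\<in>C. X \<subseteq> U"
      by blast
  qed
  from Zorn_Lemma2[OF this] show ?thesis
    by blast
qed

lemma multiple_in_span_of_maximal_independent:
  assumes M: "zm.independent M" and max: "\<forall>N. zm.independent N \<longrightarrow> M \<subseteq> N \<longrightarrow> N = M"
  shows "\<exists>d. d \<noteq> 0 \<and> zsmul d a \<in> zm.span M"
proof (cases "a \<in> M")
  case True
  then show ?thesis
    by (intro exI[of _ 1]) (simp add: zm.span_base)
next
  case False
  then have "zm.dependent (insert a M)"
    using max by blast
  then obtain t u v where t: "finite t" "t \<subseteq> insert a M" "(\<Sum>v\<in>t. zsmul (u v) v) = 0"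
    and v: "v \<in> t" "u v \<noteq> 0"
    unfolding zm.dependent_explicit by blast
  have sum_t: "(\<Sum>v\<in>t. zsmul (u v) v) = zsmul (if a \<in> t then u a else 0) a + (\<Sum>v\<in>t - {a}. zsmul (u v) v)"
    using t(1) by (cases "a \<in> t") (simp_all add: sum.remove)
  have a: "a \<in> t \<and> u a \<noteq> 0"
  proof (rule ccontr)
    assume not: "\<not> (a \<in> t \<and> u a \<noteq> 0)"
    then have "zsmul (if a \<in> t then u a else 0) a = 0"
      by auto
    then have "(\<Sum>v\<in>t - {a}. zsmul (u v) v) = 0"
      using sum_t t(3) by simp
    moreover have "v \<in> t - {a}"
      using not v by auto
    moreover have "finite (t - {a})" "t - {a} \<subseteq> M"
      using t(1,2) by auto
    ultimately have "u v = 0"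
      using zm.independentD[OF M] by blast
    then show False
      using v(2) by contradiction
  qed
  have "(\<Sum>v\<in>t - {a}. zsmul (u v) v) \<in> zm.span M"
    using t(2) by (intro zm.span_sum zm.span_scale zm.span_base) auto
  moreover have "zsmul (u a) a = - (\<Sum>v\<in>t - {a}. zsmul (u v) v)"
    using sum_t t(3) a by (simp add: eq_neg_iff_add_eq_0)
  ultimately have "zsmul (u a) a \<in> zm.span M"
    using zm.span_neg by simp
  then show ?thesis
    using a by blast
qed

lemma infinite_independent_exists:
  assumes tf: "torsion_free TYPE('a::ab_group_add)" and "\<not> finite_tf_rank TYPE('a)"
  obtains M :: "'a::ab_group_add set" where "infinite M" "zm.independent M"
proof -
  obtain M :: "'a set" where M: "zm.independent M" "\<forall>N. zm.independent N \<longrightarrow> M \<subseteq> N \<longrightarrow> N = M"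
    using maximal_independent_exists by blast
  have "infinite M"
  proof
    assume "finite M"
    then have "z_independent S \<Longrightarrow> card S \<le> card M" for S :: "'a set"
      using card_independent_le[OF tf] multiple_in_span_of_maximal_independent[OF M]
      unfolding z_independent_iff by blast
    then show False
      using assms(2) unfolding finite_tf_rank_def by blast
  qed
  then show thesis
    using that M(1) by blast
qed

lemma independent_diff_dvd:
  assumes M: "zm.independent M" and e: "e \<in> M" "e' \<in> M" "e \<noteq> e'"
    and w: "w \<in> zm.span M" and eq: "zsmul u (e - e') = zsmul v w"
  shows "v dvd u"
proof -
  let ?R = "zm.representation M"
  have "?R (zsmul u (e - e')) e = u"
    using M e by (simp add: zm.representation_scale zm.representation_diff zm.representation_basis
        zm.span_base zm.span_diff)
  moreover have "?R (zsmul v w) e = v * ?R w e"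
    using M w by (simp add: zm.representation_scale)
  ultimately have "u = v * ?R w e"
    using eq by simp
  then show ?thesis
    by (rule dvdI)
qed

section \<open>Finiteness of \<open>Y/kY\<close>\<close>

definition finite_modulo :: "'a::ab_group_add set \<Rightarrow> int \<Rightarrow> bool" where
  "finite_modulo Y k \<longleftrightarrow> (\<exists>R. finite R \<and> Y \<subseteq> setsum R (zsmul k ` Y))"

lemma finite_modulo_unit:
  assumes Y: "zm.subspace Y" and "\<bar>k\<bar> = 1"
  shows "finite_modulo Y k"
proof -
  have "k * k = 1"
    using \<open>\<bar>k\<bar> = 1\<close> abs_mult_self_eq[of k] by simp
  then have "y = 0 + zsmul k (zsmul k y)" for y
    by simp
  moreover have "zsmul k y \<in> Y" if "y \<in> Y" for y
    using Y that by (rule zm.subspace_scale)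
  ultimately have "Y \<subseteq> setsum {0} (zsmul k ` Y)"
    unfolding setsum_def by blast
  then show ?thesis
    unfolding finite_modulo_def by blast
qed

lemma finite_modulo_mult:
  assumes "finite_modulo Y a" "finite_modulo Y b"
  shows "finite_modulo Y (a * b)"
proof -
  obtain Ra where Ra: "finite Ra" "Y \<subseteq> setsum Ra (zsmul a ` Y)"
    using assms(1) unfolding finite_modulo_def by blast
  obtain Rb where Rb: "finite Rb" "Y \<subseteq> setsum Rb (zsmul b ` Y)"
    using assms(2) unfolding finite_modulo_def by blast
  define R where "R = (\<lambda>(r, r'). r + zsmul a r') ` (Ra \<times> Rb)"
  have "Y \<subseteq> setsum R (zsmul (a * b) ` Y)"
  proof
    fix y assume "y \<in> Y"
    then obtain r z where rz: "r \<in> Ra" "z \<in> Y" "y = r + zsmul a z"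
      using Ra(2) unfolding setsum_def by blast
    then obtain r' z' where rz': "r' \<in> Rb" "z' \<in> Y" "z = r' + zsmul b z'"
      using Rb(2) unfolding setsum_def by blast
    have "y = (r + zsmul a r') + zsmul (a * b) z'"
      using rz(3) rz'(3) by (simp add: zm.scale_right_distrib add.assoc)
    moreover have "r + zsmul a r' \<in> R"
      unfolding R_def using rz(1) rz'(1) by force
    ultimately show "y \<in> setsum R (zsmul (a * b) ` Y)"
      unfolding setsum_def using rz'(2) by blast
  qed
  moreover have "finite R"
    unfolding R_def using Ra(1) Rb(1) by simp
  ultimately show ?thesis
    unfolding finite_modulo_def by blast
qed

definition independent_mod :: "'a::ab_group_add set \<Rightarrow> int \<Rightarrow> 'a set \<Rightarrow> bool" where
  "independent_mod Y p B \<longleftrightarrow> finite B \<and> B \<subseteq> Y \<and>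
     (\<forall>c. (\<Sum>b\<in>B. zsmul (c b) b) \<in> zsmul p ` Y \<longrightarrow> (\<forall>b\<in>B. p dvd c b))"

lemma independent_mod_imp_z_independent:
  fixes Y :: "'a::ab_group_add set"
  assumes tf: "torsion_free TYPE('a)" and p: "prime p" and Y: "zm.subspace Y"
    and B: "independent_mod Y p B"
  shows "z_independent B"
  unfolding z_independent_def
proof (intro conjI allI impI ballI)
  show "finite B"
    using B unfolding independent_mod_def by blast
next
  fix c s assume c: "(\<Sum>b\<in>B. zsmul (c b) b) = 0" and "s \<in> B"
  \<comment> \<open>a relation with coefficients divisible by \<open>p ^ j\<close> can be divided by \<open>p ^ j\<close>, so \<open>p\<close> divides them once more\<close>
  have "\<forall>b\<in>B. p ^ j dvd c b" for j
  proof (induction j)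
    case (Suc j)
    define q where "q b = c b div p ^ j" for b
    have cq: "c b = p ^ j * q b" if "b \<in> B" for b
      unfolding q_def using Suc.IH that by simp
    have "zsmul (p ^ j) (\<Sum>b\<in>B. zsmul (q b) b) = 0"
      using c by (simp add: zm.scale_sum_right cq)
    then have "(\<Sum>b\<in>B. zsmul (q b) b) = 0"
      using torsion_free_zsmul_eq_0_iff[OF tf] p by (simp add: prime_gt_0_int)
    moreover have "(0::'a) \<in> zsmul p ` Y"
      using zm.subspace_0[OF Y] by (metis image_eqI zm.scale_zero_right)
    ultimately have "\<forall>b\<in>B. p dvd q b"
      using B unfolding independent_mod_def by simp
    then show ?case
      using cq by (simp add: mult_dvd_mono)
  qed simp
  then have "infinite {j. p ^ j dvd c s}"
    using \<open>s \<in> B\<close> by simp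
  then show "c s = 0"
    using is_unit_iff_infinite_divisor_powers[of "c s" p] prime_gt_1_int[OF p] by auto
qed

lemma mem_span_mod_if_coprime_multiple:
  fixes Y :: "'a::ab_group_add set"
  assumes Y: "zm.subspace Y" and "y \<in> Y" and "coprime c p"
    and "x \<in> zm.span B" "z \<in> Y" and cy: "zsmul c y = x + zsmul p z"
  shows "y \<in> setsum (zm.span B) (zsmul p ` Y)"
proof -
  obtain u v where uv: "u * c + v * p = 1"
    using bezout_int[of c p] \<open>coprime c p\<close> by auto
  have "y = zsmul (u * c + v * p) y"
    using uv by simp
  also have "\<dots> = zsmul u (zsmul c y) + zsmul p (zsmul v y)"
    by (simp add: zm.scale_left_distrib mult.commute)
  also have "\<dots> = zsmul u x + zsmul p (zsmul u z + zsmul v y)"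
    by (simp add: cy zm.scale_right_distrib mult.commute add.assoc)
  finally have "y = zsmul u x + zsmul p (zsmul u z + zsmul v y)" .
  moreover have "zsmul u x \<in> zm.span B"
    using \<open>x \<in> zm.span B\<close> by (rule zm.span_scale)
  moreover have "zsmul u z + zsmul v y \<in> Y"
    using Y \<open>z \<in> Y\<close> \<open>y \<in> Y\<close> by (intro zm.subspace_add zm.subspace_scale)
  ultimately show ?thesis
    unfolding setsum_def by blast
qed

lemma independent_mod_maximal:
  fixes Y :: "'a::ab_group_add set"
  assumes p: "prime p" and Y: "zm.subspace Y" and B: "independent_mod Y p B"
    and "y \<in> Y" and not_indep: "\<not> independent_mod Y p (insert y B)"
  shows "y \<in> setsum (zm.span B) (zsmul p ` Y)"
proof -
  have fB: "finite B" "B \<subseteq> Y"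
    using B unfolding independent_mod_def by auto
  then have "y \<notin> B"
    using B not_indep by (metis insert_absorb)
  obtain c where c: "(\<Sum>x\<in>insert y B. zsmul (c x) x) \<in> zsmul p ` Y" "\<exists>x\<in>insert y B. \<not> p dvd c x"
    using not_indep fB \<open>y \<in> Y\<close> unfolding independent_mod_def by auto
  then obtain z where z: "z \<in> Y" "zsmul (c y) y + (\<Sum>x\<in>B. zsmul (c x) x) = zsmul p z"
    using fB(1) \<open>y \<notin> B\<close> by auto
  have "\<not> p dvd c y"
  proof
    assume "p dvd c y"
    then obtain q where "c y = p * q"
      by blast
    then have "(\<Sum>x\<in>B. zsmul (c x) x) = zsmul p (z - zsmul q y)"
      using z(2) by (simp add: zm.scale_right_diff_distrib algebra_simps)
    moreover have "z - zsmul q y \<in> Y"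
      using z(1) \<open>y \<in> Y\<close> Y by (intro zm.subspace_diff zm.subspace_scale)
    ultimately have "\<forall>b\<in>B. p dvd c b"
      using B unfolding independent_mod_def by blast
    then show False
      using c(2) \<open>p dvd c y\<close> by auto
  qed
  then have "coprime (c y) p"
    using prime_imp_coprime[OF p] coprime_commute by blast
  moreover have "zsmul (c y) y = - (\<Sum>x\<in>B. zsmul (c x) x) + zsmul p z"
    using z(2) by (simp add: eq_neg_iff_add_eq_0 algebra_simps)
  moreover have "- (\<Sum>x\<in>B. zsmul (c x) x) \<in> zm.span B"
    by (intro zm.span_neg zm.span_sum zm.span_scale zm.span_base)
  ultimately show ?thesis
    using mem_span_mod_if_coprime_multiple[OF Y \<open>y \<in> Y\<close>] z(1) by blast
qed

lemma span_mod_representatives: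
  fixes Y :: "'a::ab_group_add set"
  assumes Y: "zm.subspace Y" and "finite B" "B \<subseteq> Y" and "p > 0"
    and "x \<in> zm.span B" "z \<in> Y"
  shows "x + zsmul p z \<in> setsum ((\<lambda>a. \<Sum>b\<in>B. zsmul (a b) b) ` PiE B (\<lambda>_. {0..<p})) (zsmul p ` Y)"
proof -
  obtain c where x: "x = (\<Sum>b\<in>B. zsmul (c b) b)"
    using assms(5) zm.span_finite[OF \<open>finite B\<close>] by auto
  define r where "r = restrict (\<lambda>b. c b mod p) B"
  have "r \<in> PiE B (\<lambda>_. {0..<p})"
    unfolding r_def using \<open>p > 0\<close> by simp
  moreover have "x + zsmul p z = (\<Sum>b\<in>B. zsmul (r b) b) + zsmul p ((\<Sum>b\<in>B. zsmul (c b div p) b) + z)"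
  proof -
    have "x = (\<Sum>b\<in>B. zsmul (c b mod p) b + zsmul p (zsmul (c b div p) b))"
      unfolding x by (intro sum.cong) (simp_all flip: zm.scale_left_distrib)
    also have "\<dots> = (\<Sum>b\<in>B. zsmul (r b) b) + zsmul p (\<Sum>b\<in>B. zsmul (c b div p) b)"
      by (simp add: r_def sum.distrib zm.scale_sum_right)
    finally show ?thesis
      by (simp add: zm.scale_right_distrib add.assoc)
  qed
  moreover have "(\<Sum>b\<in>B. zsmul (c b div p) b) + z \<in> Y"
    using Y assms(3,6) by (intro zm.subspace_add zm.subspace_sum zm.subspace_scale) auto
  ultimately show ?thesis
    unfolding setsum_def by blast
qed

lemma independent_mod_max_card_exists:
  fixes Y :: "'a::ab_group_add set"
  assumes tf: "torsion_free TYPE('a)" and rk: "finite_tf_rank TYPE('a)"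
    and Y: "zm.subspace Y" and p: "prime p"
  obtains B where "independent_mod Y p B" "\<And>B'. independent_mod Y p B' \<Longrightarrow> card B' \<le> card B"
proof -
  obtain N where "\<And>S::'a set. z_independent S \<Longrightarrow> card S \<le> N"
    using rk unfolding finite_tf_rank_def by blast
  then have bounded: "\<forall>t. (\<exists>B. independent_mod Y p B \<and> card B = t) \<longrightarrow> t \<le> N"
    using independent_mod_imp_z_independent[OF tf p Y] by blast
  have "\<exists>B. independent_mod Y p B \<and> card B = 0"
    by (intro exI[of _ "{}"]) (simp add: independent_mod_def)
  then obtain t where "\<exists>B. independent_mod Y p B \<and> card B = t"
    and "\<And>t'. \<exists>B. independent_mod Y p B \<and> card B = t' \<Longrightarrow> t' \<le> t"
    using Nat.ex_has_greatest_nat[OF _ bounded] by blast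
  then show thesis
    using that by blast
qed

lemma finite_modulo_prime:
  fixes Y :: "'a::ab_group_add set"
  assumes tf: "torsion_free TYPE('a)" and rk: "finite_tf_rank TYPE('a)"
    and Y: "zm.subspace Y" and p: "prime p"
  shows "finite_modulo Y p"
proof -
  obtain B where B: "independent_mod Y p B"
    and B_max: "\<And>B'. independent_mod Y p B' \<Longrightarrow> card B' \<le> card B"
    using independent_mod_max_card_exists[OF assms] by blast
  have fB: "finite B" "B \<subseteq> Y"
    using B unfolding independent_mod_def by auto
  define R where "R = (\<lambda>a. \<Sum>b\<in>B. zsmul (a b) b) ` PiE B (\<lambda>_. {0..<p})"
  have "Y \<subseteq> setsum R (zsmul p ` Y)"
  proof
    fix y assume "y \<in> Y"
    have "y \<in> setsum (zm.span B) (zsmul p ` Y)"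
    proof (cases "independent_mod Y p (insert y B)")
      case True
      then have "y \<in> B"
        using B_max[of "insert y B"] fB(1) by (simp add: card_insert_if split: if_splits)
      then have "y + zsmul p 0 \<in> setsum (zm.span B) (zsmul p ` Y)"
        unfolding setsum_def using zm.span_base zm.subspace_0[OF Y] by blast
      then show ?thesis
        by simp
    next
      case False
      then show ?thesis
        using independent_mod_maximal[OF p Y B \<open>y \<in> Y\<close>] by blast
    qed
    then obtain x w where "x \<in> zm.span B" "w \<in> Y" "y = x + zsmul p w"
      unfolding setsum_def by blast
    then show "y \<in> setsum R (zsmul p ` Y)"
      unfolding R_def using span_mod_representatives[OF Y fB prime_gt_0_int[OF p]] by simp
  qed
  moreover have "finite R"
    unfolding R_def using fB(1) by (simp add: finite_PiE)
  ultimately show ?thesis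
    unfolding finite_modulo_def by blast
qed

lemma finite_modulo_if:
  fixes Y :: "'a::ab_group_add set"
  assumes tf: "torsion_free TYPE('a)" and Y: "zm.subspace Y"
  shows "k \<noteq> 0 \<Longrightarrow> (\<bar>k\<bar> \<noteq> 1 \<longrightarrow> finite_tf_rank TYPE('a)) \<Longrightarrow> finite_modulo Y k"
proof (induction "nat \<bar>k\<bar>" arbitrary: k rule: less_induct)
  case less
  show ?case
  proof (cases "\<bar>k\<bar> = 1")
    case True
    then show ?thesis
      by (rule finite_modulo_unit[OF Y])
  next
    case False
    then have rk: "finite_tf_rank TYPE('a)"
      using less.prems(2) by blast
    obtain p where p: "prime p" "p dvd k"
      using prime_factor_int[OF False] by blast
    then obtain k' where k': "k = p * k'"
      by blast
    have "k' \<noteq> 0"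
      using less.prems(1) k' by auto
    moreover have "nat \<bar>k'\<bar> < nat \<bar>k\<bar>"
      using k' prime_gt_1_int[OF p(1)] \<open>k' \<noteq> 0\<close> by (simp add: abs_mult)
    ultimately have "finite_modulo Y k'"
      using less.hyps rk by blast
    then show ?thesis
      unfolding k' by (rule finite_modulo_mult[OF finite_modulo_prime[OF tf rk Y p(1)]])
  qed
qed

section \<open>Inertia and multiplication by \<open>m/n\<close>\<close>

lemma finite_quot_if_finite_modulo:
  assumes X: "zm.subspace X" and "finite_modulo Y k" and "zsmul k ` Y \<subseteq> X"
  shows "finite_quot Y X"
proof -
  obtain R where "finite R" "Y \<subseteq> setsum R (zsmul k ` Y)"
    using assms(2) unfolding finite_modulo_def by blast
  moreover have "setsum R (zsmul k ` Y) \<subseteq> setsum R X"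
    using assms(3) unfolding setsum_def by blast
  ultimately show ?thesis
    using finite_quot_if_covered[OF X] by blast
qed

lemma mult_by_imp_inertial:
  fixes \<phi> :: "'a::ab_group_add \<Rightarrow> 'a"
  assumes tf: "torsion_free TYPE('a)" and endo: "endomorphism \<phi>"
    and mb: "mult_by \<phi> m n" and rk: "\<bar>n\<bar> \<noteq> 1 \<longrightarrow> finite_tf_rank TYPE('a)"
  shows "inertial \<phi>"
  unfolding inertial_def
proof (intro allI impI)
  interpret \<phi>: module_hom zsmul zsmul \<phi>
    using endomorphism_module_hom[OF endo] .
  fix X :: "'a set" assume "subgrp X"
  then have X: "zm.subspace X"
    by (simp add: subgrp_iff_subspace)
  let ?Y = "setsum (\<phi> ` X) X"
  have "zsmul n ` ?Y \<subseteq> X"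
  proof
    fix v assume "v \<in> zsmul n ` ?Y"
    then obtain a b where "a \<in> X" "b \<in> X" "v = zsmul n (\<phi> a + b)"
      unfolding setsum_def by blast
    moreover have "zsmul n (\<phi> a) = zsmul m a"
      using mb unfolding mult_by_def by blast
    ultimately show "v \<in> X"
      using X by (simp add: zm.scale_right_distrib zm.subspace_add zm.subspace_scale)
  qed
  moreover have "finite_modulo ?Y n"
    using finite_modulo_if[OF tf subspace_setsum[OF \<phi>.subspace_image[OF X] X]] mb rk
    unfolding mult_by_def by blast
  ultimately show "finite_quot ?Y X"
    using finite_quot_if_finite_modulo[OF X] by blast
qed

lemma mult_by_imp_left_inertial:
  fixes \<phi> :: "'a::ab_group_add \<Rightarrow> 'a"
  assumes tf: "torsion_free TYPE('a)" and endo: "endomorphism \<phi>"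
    and mb: "mult_by \<phi> m n" and "m \<noteq> 0" and rk: "\<bar>m\<bar> \<noteq> 1 \<longrightarrow> finite_tf_rank TYPE('a)"
  shows "left_inertial \<phi>"
  unfolding left_inertial_def
proof (intro allI impI)
  interpret \<phi>: module_hom zsmul zsmul \<phi>
    using endomorphism_module_hom[OF endo] .
  fix X :: "'a set" assume "subgrp X"
  then have X: "zm.subspace X"
    by (simp add: subgrp_iff_subspace)
  have "zsmul m ` X \<subseteq> X \<inter> \<phi> ` X"
  proof
    fix v assume "v \<in> zsmul m ` X"
    then obtain x where "x \<in> X" "v = zsmul m x"
      by blast
    moreover have "zsmul m x = \<phi> (zsmul n x)"
      using mb unfolding mult_by_def by (simp add: \<phi>.scale)
    moreover have "zsmul m x \<in> X" "zsmul n x \<in> X"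
      using X \<open>x \<in> X\<close> by (simp_all add: zm.subspace_scale)
    ultimately show "v \<in> X \<inter> \<phi> ` X"
      by auto
  qed
  moreover have "finite_modulo X m"
    using finite_modulo_if[OF tf X] \<open>m \<noteq> 0\<close> rk by blast
  ultimately show "finite_quot X (X \<inter> \<phi> ` X)"
    using finite_quot_if_finite_modulo[OF zm.subspace_inter[OF X \<phi>.subspace_image[OF X]]] by blast
qed

lemma inertial_imp_finite_rank:
  fixes \<phi> :: "'a::ab_group_add \<Rightarrow> 'a"
  assumes tf: "torsion_free TYPE('a)" and endo: "endomorphism \<phi>" and "inertial \<phi>"
    and mb: "mult_by \<phi> m n" and "coprime m n" and "\<bar>n\<bar> \<noteq> 1"
  shows "finite_tf_rank TYPE('a)"
proof (rule ccontr)
  interpret \<phi>: module_hom zsmul zsmul \<phi>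
    using endomorphism_module_hom[OF endo] .
  assume "\<not> finite_tf_rank TYPE('a)"
  then obtain M :: "'a set" where M: "infinite M" "zm.independent M"
    using infinite_independent_exists[OF tf] by blast
  define X where "X = zm.span M"
  have "subgrp X"
    unfolding X_def subgrp_iff_subspace by simp
  then have "finite_quot (setsum (\<phi> ` X) X) X"
    using \<open>inertial \<phi>\<close> unfolding inertial_def by blast
  moreover have "0 \<in> X"
    unfolding X_def by (rule zm.span_zero)
  moreover have "\<phi> ` M \<subseteq> setsum (\<phi> ` X) X"
  proof
    fix v assume "v \<in> \<phi> ` M"
    then have "v + 0 \<in> setsum (\<phi> ` X) X"
      unfolding setsum_def X_def using zm.span_base zm.span_zero by blast
    then show "v \<in> setsum (\<phi> ` X) X"
      by simp
  qed
  ultimately obtain e e' where e: "e \<in> M" "e' \<in> M" "e \<noteq> e'" "\<phi> e - \<phi> e' \<in> X"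
    by (rule finite_quot_collision[OF _ _ M(1)])
  have "zsmul m (e - e') = zsmul n (\<phi> e - \<phi> e')"
    using mb unfolding mult_by_def by (simp add: zm.scale_right_diff_distrib)
  then have "n dvd m"
    using independent_diff_dvd[OF M(2) e(1-3)] e(4) unfolding X_def by blast
  then show False
    using coprime_common_divisor[OF \<open>coprime m n\<close>, of n] \<open>\<bar>n\<bar> \<noteq> 1\<close> by simp
qed

lemma left_inertial_imp_finite_rank:
  fixes \<phi> :: "'a::ab_group_add \<Rightarrow> 'a"
  assumes tf: "torsion_free TYPE('a)" and endo: "endomorphism \<phi>" and "left_inertial \<phi>"
    and mb: "mult_by \<phi> m n" and "coprime m n" and "\<bar>m\<bar> \<noteq> 1"
  shows "finite_tf_rank TYPE('a)"
proof (rule ccontr)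
  interpret \<phi>: module_hom zsmul zsmul \<phi>
    using endomorphism_module_hom[OF endo] .
  assume "\<not> finite_tf_rank TYPE('a)"
  then obtain M :: "'a set" where M: "infinite M" "zm.independent M"
    using infinite_independent_exists[OF tf] by blast
  define X where "X = zm.span M"
  have "subgrp X"
    unfolding X_def subgrp_iff_subspace by simp
  then have "finite_quot X (X \<inter> \<phi> ` X)"
    using \<open>left_inertial \<phi>\<close> unfolding left_inertial_def by blast
  moreover have "0 \<in> X \<inter> \<phi> ` X"
    using imageI[OF zm.span_zero, of \<phi> M] unfolding X_def by (simp add: zm.span_zero)
  moreover have "id ` M \<subseteq> X"
    unfolding X_def using zm.span_base by auto
  ultimately obtain e e' where e: "e \<in> M" "e' \<in> M" "e \<noteq> e'" "id e - id e' \<in> X \<inter> \<phi> ` X"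
    by (rule finite_quot_collision[OF _ _ M(1)])
  then obtain w where w: "w \<in> X" "e - e' = \<phi> w"
    by auto
  have "zsmul n (e - e') = zsmul m w"
    using mb w(2) unfolding mult_by_def by simp
  then have "m dvd n"
    using independent_diff_dvd[OF M(2) e(1-3)] w(1) unfolding X_def by blast
  then show False
    using coprime_common_divisor[OF \<open>coprime m n\<close>, of m] \<open>\<bar>m\<bar> \<noteq> 1\<close> by simp
qed

theorem proposition2p2:
  fixes \<phi> :: "'a::ab_group_add \<Rightarrow> 'a"
  assumes "torsion_free TYPE('a)"
    and "endomorphism \<phi>"
  shows "(inertial \<phi> \<longleftrightarrow>
           (\<exists>m n::int. coprime m n \<and> mult_by \<phi> m n \<and>
              (\<bar>n\<bar> \<noteq> 1 \<longrightarrow> finite_tf_rank TYPE('a))))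
       \<and> (left_inertial \<phi> \<longleftrightarrow>
           (\<exists>m n::int. coprime m n \<and> m \<noteq> 0 \<and> mult_by \<phi> m n \<and>
              (\<bar>m\<bar> \<noteq> 1 \<longrightarrow> finite_tf_rank TYPE('a))))"
proof (intro conjI iffI)
  assume "inertial \<phi>"
  then obtain m n where "coprime m n" "mult_by \<phi> m n"
    using inertial_imp_mult_by[OF assms] by blast
  then show "\<exists>m n::int. coprime m n \<and> mult_by \<phi> m n \<and> (\<bar>n\<bar> \<noteq> 1 \<longrightarrow> finite_tf_rank TYPE('a))"
    using inertial_imp_finite_rank[OF assms \<open>inertial \<phi>\<close>] by blast
next
  assume "left_inertial \<phi>"
  then obtain m n where "coprime m n" "m \<noteq> 0" "mult_by \<phi> m n"
    using left_inertial_imp_mult_by[OF assms] by blast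
  then show "\<exists>m n::int. coprime m n \<and> m \<noteq> 0 \<and> mult_by \<phi> m n \<and> (\<bar>m\<bar> \<noteq> 1 \<longrightarrow> finite_tf_rank TYPE('a))"
    using left_inertial_imp_finite_rank[OF assms \<open>left_inertial \<phi>\<close>] by blast
qed (use mult_by_imp_inertial[OF assms] mult_by_imp_left_inertial[OF assms] in blast)+

end
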